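(* Let $\theta>0$. The functions $\mathbf p_2,\mathbf p_3,\dots$ on $\mathbb Y$ belong to $\mathcal A_\theta$ and form a system of algebraically independent generators of $\mathcal A_\theta$ compatible with the filtration: under the identification $\mathcal A_\theta=\mathbb R[\mathbf p_2,\mathbf p_3,\dots]$, the filtration of $\mathcal A_\theta$ is the one determined by $\deg\mathbf p_m=m-1$, $m=2,3,\dots$. In other words, $\mathcal A_\theta$ coincides with the algebra of super-symmetric functions in Kerov's interlacing coordinates.
   Context: Draw $\lambda\in\mathbb Y$ in English convention (row axis downward, column axis to the right). The border of $\lambda$, traversed from $+\infty$ along the horizontal axis to $+\infty$ along the vertical axis, has $2d-1$ corners with coordinates $(r_k,s_k)$ ($r$ = row coordinate, $s$ = column coordinate), $1\le k\le 2d-1$, ordered along the path; odd $k$ are inner corners (horizontal-to-vertical turns), even $k$ outer corners. (E.g. for $\lambda=(3,3,1)$: inner corners $(0,3),(2,1),(3,0)$, outer corners $(2,3),(3,1)$.) Kerov's interlacing coordinates are $x_i=s_{2i-1}-\theta r_{2i-1}$ ($1\le i\le d$) and $y_j=s_{2j}-\theta r_{2j}$ ($1\le j\le d-1$); they satisfy $x_1>y_1>x_2>\dots>y_{d-1}>x_d$ and $\sum x_i-\sum y_j=0$. Set $\mathbf p_m(\lambda)=\sum_{i=1}^dx_i^m-\sum_{j=1}^{d-1}y_j^m$. $\mathcal A_\theta$ is the unital $\mathbb R$-algebra of functions on $\mathbb Y$ generated by the algebraically independent functions $p^*_{m;\theta}(\lambda)=\sum_{i=1}^{\ell(\lambda)}[(\lambda_i-\theta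 i)^m-(-\theta i)^m]$, $m\ge1$ ($\lambda_i$ row lengths, $\ell(\lambda)$ number of nonzero rows), filtered by $\deg p^*_{m;\theta}=m$. *)

theory Defs
  imports Complex_Main "HOL-Library.Poly_Mapping"
begin

definition is_partition :: "nat list \<Rightarrow> bool" where
  "is_partition xs \<longleftrightarrow> sorted_wrt (\<ge>) xs \<and> 0 \<notin> set xs"

definition YY :: "nat list set" where
  "YY = {xs. is_partition xs}"

text \<open>Row length lambda_i (1-based), zero beyond the last row.\<close>
definition part_at :: "nat list \<Rightarrow> nat \<Rightarrow> nat" where
  "part_at xs i = (if 1 \<le> i \<and> i \<le> length xs then xs ! (i - 1) else 0)"

text \<open>Corners (r,s) of the border of lambda (r row coordinate, s column coordinate).\<close>
definition inner_corners :: "nat list \<Rightarrow> (nat \<times> nat) set" where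
  "inner_corners xs = {(r, s). r \<le> length xs \<and> s = part_at xs (r + 1) \<and>
      (r = 0 \<or> part_at xs r > part_at xs (r + 1))}"

definition outer_corners :: "nat list \<Rightarrow> (nat \<times> nat) set" where
  "outer_corners xs = {(r, s). 1 \<le> r \<and> r \<le> length xs \<and> s = part_at xs r \<and>
      part_at xs r > part_at xs (r + 1)}"

definition kcoord :: "real \<Rightarrow> nat \<times> nat \<Rightarrow> real" where
  "kcoord \<theta> c = real (snd c) - \<theta> * real (fst c)"

definition pbold :: "real \<Rightarrow> nat \<Rightarrow> nat list \<Rightarrow> real" where
  "pbold \<theta> m xs = (\<Sum>c\<in>inner_corners xs. kcoord \<theta> c ^ m) - (\<Sum>c\<in>outer_corners xs. kcoord \<theta> c ^ m)"

definition pstar :: "real \<Rightarrow> nat \<Rightarrow> nat list \<Rightarrow> real" where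
  "pstar \<theta> m xs = (\<Sum>i = 1..length xs.
      (real (part_at xs i) - \<theta> * real i) ^ m - (- \<theta> * real i) ^ m)"

text \<open>Polynomials in countably many variables X_0, X_1, ... with real coefficients:
  a monomial is an exponent vector (finitely supported nat to nat); a polynomial is a finitely supported
  coefficient function on monomials.\<close>
type_synonym rpoly = "(nat \<Rightarrow>\<^sub>0 nat) \<Rightarrow>\<^sub>0 real"

definition evalmono :: "(nat \<Rightarrow> nat list \<Rightarrow> real) \<Rightarrow> (nat \<Rightarrow>\<^sub>0 nat) \<Rightarrow> nat list \<Rightarrow> real" where
  "evalmono g mo xs = (\<Prod>k\<in>Poly_Mapping.keys mo. g k xs ^ Poly_Mapping.lookup mo k)"

definition evalp :: "(nat \<Rightarrow> nat list \<Rightarrow> real) \<Rightarrow> rpoly \<Rightarrow> nat list \<Rightarrow> real" where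
  "evalp g P xs = (\<Sum>mo\<in>Poly_Mapping.keys P. Poly_Mapping.lookup P mo * evalmono g mo xs)"

definition wdeg :: "(nat \<Rightarrow> nat) \<Rightarrow> (nat \<Rightarrow>\<^sub>0 nat) \<Rightarrow> nat" where
  "wdeg w a = (\<Sum>k\<in>Poly_Mapping.keys a. Poly_Mapping.lookup a k * w k)"

definition filt :: "(nat \<Rightarrow> nat list \<Rightarrow> real) \<Rightarrow> (nat \<Rightarrow> nat) \<Rightarrow> nat \<Rightarrow> (nat list \<Rightarrow> real) set" where
  "filt g w n = {f. \<exists>P. (\<forall>a\<in>Poly_Mapping.keys P. wdeg w a \<le> n) \<and> (\<forall>xs\<in>YY. f xs = evalp g P xs)}"

definition alg_indep_on_Y :: "(nat \<Rightarrow> nat list \<Rightarrow> real) \<Rightarrow> bool" where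
  "alg_indep_on_Y g \<longleftrightarrow> (\<forall>P. (\<forall>xs\<in>YY. evalp g P xs = 0) \<longrightarrow> P = 0)"

text \<open>A_theta with its filtration: generators X_k := p*_{k+1}, deg = k+1.\<close>
definition Afilt :: "real \<Rightarrow> nat \<Rightarrow> (nat list \<Rightarrow> real) set" where
  "Afilt \<theta> n = filt (\<lambda>k. pstar \<theta> (k + 1)) (\<lambda>k. k + 1) n"

definition Atheta :: "real \<Rightarrow> (nat list \<Rightarrow> real) set" where
  "Atheta \<theta> = (\<Union>n. Afilt \<theta> n)"

text \<open>Filtration determined by the bold p's: X_k := p_{k+2}, deg = k+1 = (k+2)-1.\<close>
definition Pfilt :: "real \<Rightarrow> nat \<Rightarrow> (nat list \<Rightarrow> real) set" where
  "Pfilt \<theta> n = filt (\<lambda>k. pbold \<theta> (k + 2)) (\<lambda>k. k + 1) n"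

end

theory Submission
  imports Defs "HOL-Computational_Algebra.Polynomial"
begin

text \<open>
  The proof rests on one identity, valid on every Young diagram for m \<ge> 1:
     p_m = sum_{j<m} C(m,j) \<theta>^(m-j) p*_j                              (pbold_pstar).
  It is obtained by walking along the border of the diagram: corners that are not turning
  points cancel, the contributions regroup row by row into (a+\<theta>)^m - a^m with
  a = lambda_i - \<theta> i, minus the same expression for the empty row, and the binomial theorem
  finishes.  Since the coefficient of p*_{m-1} is m \<theta> \<noteq> 0, the expansion is triangular:
  p_{k+2} lies in filtration degree k+1 of A_\<theta>, and conversely p*_{k+1} is a polynomial in the
  p's of the same degree, so the two filtrations coincide (Afilt_eq_Pfilt).

  Algebraic independence of the p_{k+2} reduces, by the same invertible triangular
  substitution, to that of the p*_k (pstar_alg_indep).  For the latter, a relation on diagrams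
  extends to arbitrary real row lengths (a coordinate-wise polynomial vanishing on a large box
  of integer points vanishes), then rows whose shifted lengths are 1, ..., n with arbitrary
  integer multiplicities turn the relation into a polynomial vanishing identically after an
  onto affine (Vandermonde) substitution, and Kronecker substitution shows it is zero.
\<close>
section \<open>Evaluating polynomials in countably many variables\<close>

definition eval_mono :: "(nat \<Rightarrow> 'x \<Rightarrow> real) \<Rightarrow> (nat \<Rightarrow>\<^sub>0 nat) \<Rightarrow> 'x \<Rightarrow> real" where
  "eval_mono g a x = (\<Prod>k\<in>Poly_Mapping.keys a. g k x ^ Poly_Mapping.lookup a k)"

definition eval_poly :: "(nat \<Rightarrow> 'x \<Rightarrow> real) \<Rightarrow> rpoly \<Rightarrow> 'x \<Rightarrow> real" where
  "eval_poly g P x = (\<Sum>a\<in>Poly_Mapping.keys P. Poly_Mapping.lookup P a * eval_mono g a x)"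

lemma evalp_eq_eval_poly: "evalp g P xs = eval_poly g P xs"
  by (simp add: evalp_def eval_poly_def evalmono_def eval_mono_def)

lemma eval_mono_superset:
  assumes "finite S" "Poly_Mapping.keys a \<subseteq> S"
  shows "eval_mono g a x = (\<Prod>k\<in>S. g k x ^ Poly_Mapping.lookup a k)"
  unfolding eval_mono_def
  by (rule prod.mono_neutral_left) (use assms in \<open>auto simp: in_keys_iff\<close>)

lemma eval_poly_superset:
  assumes "finite S" "Poly_Mapping.keys P \<subseteq> S"
  shows "eval_poly g P x = (\<Sum>a\<in>S. Poly_Mapping.lookup P a * eval_mono g a x)"
  unfolding eval_poly_def
  by (rule sum.mono_neutral_left) (use assms in \<open>auto simp: in_keys_iff\<close>)

lemma wdeg_superset:
  assumes "finite S" "Poly_Mapping.keys a \<subseteq> S"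
  shows "wdeg w a = (\<Sum>k\<in>S. Poly_Mapping.lookup a k * w k)"
  unfolding wdeg_def
  by (rule sum.mono_neutral_left) (use assms in \<open>auto simp: in_keys_iff\<close>)

lemma eval_mono_add: "eval_mono g (a + b) x = eval_mono g a x * eval_mono g b x"
proof -
  let ?S = "Poly_Mapping.keys a \<union> Poly_Mapping.keys b"
  have "eval_mono g (a + b) x = (\<Prod>k\<in>?S. g k x ^ Poly_Mapping.lookup (a + b) k)"
    by (rule eval_mono_superset) (simp_all add: keys_add)
  also have "\<dots> = (\<Prod>k\<in>?S. g k x ^ Poly_Mapping.lookup a k * g k x ^ Poly_Mapping.lookup b k)"
    by (simp add: lookup_add power_add)
  also have "\<dots> = eval_mono g a x * eval_mono g b x"
    by (simp add: prod.distrib eval_mono_superset[of ?S])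
  finally show ?thesis .
qed

lemma wdeg_add: "wdeg w (a + b) = wdeg w a + wdeg w b"
proof -
  let ?S = "Poly_Mapping.keys a \<union> Poly_Mapping.keys b"
  have "wdeg w (a + b) = (\<Sum>k\<in>?S. Poly_Mapping.lookup (a + b) k * w k)"
    by (rule wdeg_superset) (simp_all add: keys_add)
  also have "\<dots> = wdeg w a + wdeg w b"
    by (simp add: lookup_add distrib_right sum.distrib wdeg_superset[of ?S])
  finally show ?thesis .
qed

lemma eval_mono_zero [simp]: "eval_mono g 0 x = 1"
  by (simp add: eval_mono_def)

lemma eval_mono_var [simp]: "eval_mono g (Poly_Mapping.single k (Suc 0)) x = g k x"
  by (simp add: eval_mono_def)

lemma eval_poly_zero [simp]: "eval_poly g 0 x = 0"
  by (simp add: eval_poly_def)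

lemma eval_poly_single [simp]: "eval_poly g (Poly_Mapping.single a c) x = c * eval_mono g a x"
  by (simp add: eval_poly_def)

lemma eval_poly_add: "eval_poly g (P + Q) x = eval_poly g P x + eval_poly g Q x"
proof -
  let ?S = "Poly_Mapping.keys P \<union> Poly_Mapping.keys Q"
  have "eval_poly g (P + Q) x = (\<Sum>a\<in>?S. Poly_Mapping.lookup (P + Q) a * eval_mono g a x)"
    by (rule eval_poly_superset) (simp_all add: keys_add)
  also have "\<dots> = eval_poly g P x + eval_poly g Q x"
    by (simp add: lookup_add distrib_right sum.distrib eval_poly_superset[of ?S])
  finally show ?thesis .
qed

lemma eval_poly_sum: "eval_poly g (sum F A) x = (\<Sum>i\<in>A. eval_poly g (F i) x)"
  by (induction A rule: infinite_finite_induct) (auto simp: eval_poly_add)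

lemma poly_mapping_term_expansion:
  fixes P :: "'a \<Rightarrow>\<^sub>0 'b::comm_monoid_add"
  shows "P = (\<Sum>a\<in>Poly_Mapping.keys P. Poly_Mapping.single a (Poly_Mapping.lookup P a))"
proof -
  have lookup_partial: "finite I \<Longrightarrow> Poly_Mapping.lookup (\<Sum>a\<in>I. Poly_Mapping.single a (Poly_Mapping.lookup P a)) j
      = (if j \<in> I then Poly_Mapping.lookup P j else 0)" for I j
    by (induction I rule: finite_induct) (auto simp: lookup_single lookup_add when_def)
  show ?thesis
    by (rule poly_mapping_eqI) (fastforce simp add: in_keys_iff lookup_partial)
qed

lemma eval_poly_mult: "eval_poly g (P * Q) x = eval_poly g P x * eval_poly g Q x"
proof -
  let ?A = "Poly_Mapping.keys P" and ?B = "Poly_Mapping.keys Q"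
  have "P * Q = (\<Sum>a\<in>?A. Poly_Mapping.single a (Poly_Mapping.lookup P a)) *
                (\<Sum>b\<in>?B. Poly_Mapping.single b (Poly_Mapping.lookup Q b))"
    using poly_mapping_term_expansion[of P] poly_mapping_term_expansion[of Q] by simp
  also have "\<dots> = (\<Sum>a\<in>?A. \<Sum>b\<in>?B.
      Poly_Mapping.single (a + b) (Poly_Mapping.lookup P a * Poly_Mapping.lookup Q b))"
    by (simp add: sum_distrib_left sum_distrib_right mult_single) (rule sum.swap)
  finally have "eval_poly g (P * Q) x = (\<Sum>a\<in>?A. \<Sum>b\<in>?B.
      Poly_Mapping.lookup P a * Poly_Mapping.lookup Q b * (eval_mono g a x * eval_mono g b x))"
    by (simp add: eval_poly_sum eval_mono_add)
  also have "\<dots> = eval_poly g P x * eval_poly g Q x"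
    by (simp add: eval_poly_def sum_product mult_ac)
  finally show ?thesis .
qed

lemma eval_poly_closure:
  fixes C :: "('x \<Rightarrow> real) \<Rightarrow> nat \<Rightarrow> bool"
  assumes const: "\<And>c. C (\<lambda>x. c) 0"
    and mult: "\<And>f h a b. C f a \<Longrightarrow> C h b \<Longrightarrow> C (\<lambda>x. f x * h x) (a + b)"
    and add: "\<And>f h a. C f a \<Longrightarrow> C h a \<Longrightarrow> C (\<lambda>x. f x + h x) a"
    and mono: "\<And>f a b. C f a \<Longrightarrow> a \<le> b \<Longrightarrow> C f b"
    and gen: "\<And>k. C (g k) (w k)"
    and deg: "\<forall>a\<in>Poly_Mapping.keys P. wdeg w a \<le> n"
  shows "C (eval_poly g P) n"
proof -
  have power: "C (\<lambda>x. f x ^ e) (e * a)" if "C f a" for f e a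
  proof (induction e)
    case 0 then show ?case using const by simp
  next
    case (Suc e)
    from mult[OF that Suc] show ?case by (simp add: add.commute mult.commute)
  qed
  have product: "finite K \<Longrightarrow> C (\<lambda>x. \<Prod>k\<in>K. g k x ^ e k) (\<Sum>k\<in>K. e k * w k)" for K e
  proof (induction K rule: finite_induct)
    case empty then show ?case using const by simp
  next
    case (insert k K)
    from mult[OF power[OF gen[of k], of "e k"] insert(3)] insert(1,2) show ?case by simp
  qed
  have monomial: "C (\<lambda>x. c * eval_mono g a x) (wdeg w a)" for c a
    using mult[OF const[of c] product[of "Poly_Mapping.keys a" "Poly_Mapping.lookup a"]]
    by (simp add: eval_mono_def wdeg_def)
  have "finite M \<Longrightarrow> M \<subseteq> Poly_Mapping.keys P \<Longrightarrow>
      C (\<lambda>x. \<Sum>a\<in>M. Poly_Mapping.lookup P a * eval_mono g a x) n" for M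
  proof (induction M rule: finite_induct)
    case empty then show ?case using mono[OF const[of 0]] by simp
  next
    case (insert a M)
    have "C (\<lambda>x. Poly_Mapping.lookup P a * eval_mono g a x) n"
      using mono[OF monomial] deg insert(4) by blast
    from add[OF this insert(3)] insert show ?case by simp
  qed
  then show ?thesis unfolding eval_poly_def[abs_def] by simp
qed

definition vars :: "rpoly \<Rightarrow> nat set" where
  "vars P = (\<Union>a\<in>Poly_Mapping.keys P. Poly_Mapping.keys a)"

lemma vars_bounded: "\<exists>n. \<forall>k\<in>vars P. k < n"
proof -
  have "finite (vars P)" by (simp add: vars_def)
  then obtain n where "vars P \<subseteq> {..<n}" using finite_nat_bounded by blast
  then show ?thesis by auto
qed

lemma wdeg_bounded: "\<exists>D. \<forall>a\<in>Poly_Mapping.keys P. wdeg w a \<le> D"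
proof -
  have "finite (wdeg w ` Poly_Mapping.keys P)" by simp
  then show ?thesis unfolding finite_nat_set_iff_bounded_le by auto
qed

lemma eval_poly_cong_vars:
  assumes "\<And>k. k \<in> vars P \<Longrightarrow> g k x = g' k x'"
  shows "eval_poly g P x = eval_poly g' P x'"
proof -
  have agree: "g k x = g' k x'" if "a \<in> Poly_Mapping.keys P" "k \<in> Poly_Mapping.keys a" for a k
    using assms that by (auto simp: vars_def)
  show ?thesis unfolding eval_poly_def eval_mono_def
  proof (intro sum.cong refl arg_cong2[where f="(*)"] prod.cong arg_cong2[where f="(^)"])
    fix a k assume "a \<in> Poly_Mapping.keys P" "k \<in> Poly_Mapping.keys a"
    then show "g k x = g' k x'" by (rule agree)
  qed
qed

section \<open>Polynomial functions of real sequences\<close>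

definition poly_fun :: "rpoly \<Rightarrow> (nat \<Rightarrow> real) \<Rightarrow> real" where
  "poly_fun P = eval_poly (\<lambda>k y. y k) P"

definition is_poly_fun :: "((nat \<Rightarrow> real) \<Rightarrow> real) \<Rightarrow> bool" where
  "is_poly_fun f \<longleftrightarrow> (\<exists>P. f = poly_fun P)"

lemma is_poly_fun_linear: "is_poly_fun (\<lambda>y. \<Sum>j\<in>A. c j * y j)"
proof (induction A rule: infinite_finite_induct)
  case (infinite A)
  then show ?case unfolding is_poly_fun_def
    by (intro exI[of _ 0]) (auto simp: poly_fun_def)
next
  case empty
  then show ?case unfolding is_poly_fun_def
    by (intro exI[of _ 0]) (auto simp: poly_fun_def)
next
  case (insert j A)
  then obtain P where P: "(\<lambda>y. \<Sum>j\<in>A. c j * y j) = poly_fun P"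
    unfolding is_poly_fun_def by blast
  have "(\<lambda>y. \<Sum>j\<in>insert j A. c j * y j)
      = poly_fun (P + Poly_Mapping.single (Poly_Mapping.single j 1) (c j))"
    using insert(1,2) P
    by (auto simp: fun_eq_iff poly_fun_def eval_poly_add)
  then show ?case unfolding is_poly_fun_def by blast
qed

lemma is_poly_fun_subst:
  assumes "\<And>k. is_poly_fun (h k)"
  shows "is_poly_fun (eval_poly h P)"
proof (rule eval_poly_closure[where C="\<lambda>f _. is_poly_fun f" and w="\<lambda>_. 0" and n=0])
  show "is_poly_fun (\<lambda>x. c)" for c
    unfolding is_poly_fun_def
    by (intro exI[of _ "Poly_Mapping.single 0 c"]) (simp add: fun_eq_iff poly_fun_def)
  show "is_poly_fun (\<lambda>x. f x * f' x)" if "is_poly_fun f" "is_poly_fun f'" for f f'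
    using that unfolding is_poly_fun_def
    by (auto simp: fun_eq_iff poly_fun_def eval_poly_mult intro: exI[of _ "_ * _"])
  show "is_poly_fun (\<lambda>x. f x + f' x)" if "is_poly_fun f" "is_poly_fun f'" for f f'
    using that unfolding is_poly_fun_def
    by (auto simp: fun_eq_iff poly_fun_def eval_poly_add intro: exI[of _ "_ + _"])
qed (use assms in \<open>simp_all add: wdeg_def\<close>)

text \<open>Base-B expansions with digits below B are unique; this makes the Kronecker
  substitution below injective on monomials.\<close>

lemma base_expansion_less:
  fixes B :: nat
  assumes "\<forall>k<n. f k < B"
  shows "(\<Sum>k<n. f k * B ^ k) < B ^ n"
  using assms
proof (induction n)
  case (Suc n)
  then have "(\<Sum>k<Suc n. f k * B ^ k) < (f n + 1) * B ^ n" by simp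
  also have "\<dots> \<le> B * B ^ n" using Suc.prems by (intro mult_right_mono) auto
  finally show ?case by simp
qed simp

lemma base_expansion_unique:
  fixes B :: nat
  assumes "\<forall>k<n. f k < B" "\<forall>k<n. g k < B" "(\<Sum>k<n. f k * B ^ k) = (\<Sum>k<n. g k * B ^ k)"
  shows "\<forall>k<n. f k = g k"
  using assms
proof (induction n)
  case (Suc n)
  have low_f: "(\<Sum>k<n. f k * B ^ k) < B ^ n" and low_g: "(\<Sum>k<n. g k * B ^ k) < B ^ n"
    using Suc.prems(1,2) by (auto intro: base_expansion_less)
  have eq: "(\<Sum>k<n. f k * B ^ k) + f n * B ^ n = (\<Sum>k<n. g k * B ^ k) + g n * B ^ n"
    using Suc.prems(3) by simp
  have "B ^ n \<noteq> 0" using low_f by linarith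
  then have top: "f n = g n"
    using arg_cong[OF eq, of "\<lambda>s. s div B ^ n"] low_f low_g by simp
  with eq have "(\<Sum>k<n. f k * B ^ k) = (\<Sum>k<n. g k * B ^ k)" by simp
  with Suc.IH Suc.prems(1,2) have "\<forall>k<n. f k = g k" by simp
  with top show ?case by (auto simp: less_Suc_eq)
qed simp

definition kronecker_exp :: "nat \<Rightarrow> nat \<Rightarrow> (nat \<Rightarrow>\<^sub>0 nat) \<Rightarrow> nat" where
  "kronecker_exp B n a = (\<Sum>k<n. Poly_Mapping.lookup a k * B ^ k)"

lemma eval_mono_kronecker:
  assumes "Poly_Mapping.keys a \<subseteq> {..<n}"
  shows "eval_mono (\<lambda>k y. y k) a (\<lambda>k. t ^ B ^ k) = t ^ kronecker_exp B n a"
proof -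
  have "eval_mono (\<lambda>k y. y k) a (\<lambda>k. t ^ B ^ k) = (\<Prod>k<n. (t ^ B ^ k) ^ Poly_Mapping.lookup a k)"
    by (rule eval_mono_superset) (use assms in auto)
  also have "\<dots> = t ^ kronecker_exp B n a"
    by (simp add: kronecker_exp_def power_sum power_mult[symmetric] mult.commute)
  finally show ?thesis .
qed

lemma kronecker_exp_inj:
  assumes "Poly_Mapping.keys a \<subseteq> {..<n}" "Poly_Mapping.keys b \<subseteq> {..<n}"
    and "\<forall>k. Poly_Mapping.lookup a k < B" "\<forall>k. Poly_Mapping.lookup b k < B"
    and "kronecker_exp B n a = kronecker_exp B n b"
  shows "a = b"
proof (rule poly_mapping_eqI)
  fix k
  have "\<forall>k<n. Poly_Mapping.lookup a k = Poly_Mapping.lookup b k"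
    using assms(3-5) unfolding kronecker_exp_def by (intro base_expansion_unique[of n _ B]) auto
  moreover have "k \<notin> Poly_Mapping.keys a \<and> k \<notin> Poly_Mapping.keys b" if "\<not> k < n"
    using assms(1,2) that by blast
  ultimately show "Poly_Mapping.lookup a k = Poly_Mapping.lookup b k"
    by (metis in_keys_iff)
qed

lemma exponents_bounded:
  fixes P :: rpoly
  shows "\<exists>B. \<forall>a\<in>Poly_Mapping.keys P. \<forall>k. Poly_Mapping.lookup a k < B"
proof -
  have "finite (\<Union>a\<in>Poly_Mapping.keys P. Poly_Mapping.lookup a ` Poly_Mapping.keys a)" by auto
  then obtain B where B: "(\<Union>a\<in>Poly_Mapping.keys P. Poly_Mapping.lookup a ` Poly_Mapping.keys a) \<subseteq> {..<B}"
    using finite_nat_bounded by blast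
  have "Poly_Mapping.lookup a k < Suc B" if "a \<in> Poly_Mapping.keys P" for a k
  proof (cases "k \<in> Poly_Mapping.keys a")
    case True
    then have "Poly_Mapping.lookup a k \<in> {..<B}" using B that by blast
    then show ?thesis by simp
  next
    case False
    then show ?thesis by (simp add: in_keys_iff)
  qed
  then show ?thesis by (intro exI[of _ "Suc B"]) blast
qed

text \<open>Hence a polynomial whose polynomial function vanishes is zero: after Kronecker
  substitution it becomes a univariate polynomial with the same coefficients, vanishing
  everywhere.\<close>

lemma poly_fun_eq_0_imp_zero:
  assumes "\<And>y. poly_fun P y = 0"
  shows "P = 0"
proof (rule ccontr)
  assume "P \<noteq> 0"
  then obtain a0 where a0: "a0 \<in> Poly_Mapping.keys P" by fastforce
  obtain n where "\<forall>k\<in>vars P. k < n" using vars_bounded by blast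
  then have keys_n: "Poly_Mapping.keys a \<subseteq> {..<n}" if "a \<in> Poly_Mapping.keys P" for a
    using that by (auto simp: vars_def)
  obtain B where B: "\<forall>a\<in>Poly_Mapping.keys P. \<forall>k. Poly_Mapping.lookup a k < B"
    using exponents_bounded by blast
  have exp_inj: "a = b" if "a \<in> Poly_Mapping.keys P" "b \<in> Poly_Mapping.keys P"
      "kronecker_exp B n a = kronecker_exp B n b" for a b
    using kronecker_exp_inj[OF keys_n keys_n] B that by blast
  define R where "R = (\<Sum>a\<in>Poly_Mapping.keys P. monom (Poly_Mapping.lookup P a) (kronecker_exp B n a))"
  have "poly R t = poly_fun P (\<lambda>k. t ^ B ^ k)" for t
    unfolding R_def poly_fun_def eval_poly_def poly_sum poly_monom
    by (rule sum.cong) (simp_all add: eval_mono_kronecker[OF keys_n])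
  then have "R = 0" using assms poly_all_0_iff_0 by metis
  moreover have "coeff R (kronecker_exp B n a0) = Poly_Mapping.lookup P a0"
  proof -
    have "coeff R (kronecker_exp B n a0)
        = (\<Sum>a\<in>Poly_Mapping.keys P. if a = a0 then Poly_Mapping.lookup P a else 0)"
      unfolding R_def coeff_sum coeff_monom
      by (rule sum.cong) (use exp_inj a0 in auto)
    then show ?thesis using a0 by simp
  qed
  ultimately show False using a0 by (simp add: in_keys_iff)
qed

lemma zero_by_onto_substitution:
  assumes vanish: "\<And>z. eval_poly h P z = 0"
    and onto: "\<And>y. \<exists>z. \<forall>k\<in>vars P. h k z = y k"
  shows "P = 0"
proof (rule poly_fun_eq_0_imp_zero)
  fix y
  obtain z where z: "\<forall>k\<in>vars P. h k z = y k" using onto by blast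
  have "poly_fun P y = eval_poly h P z"
    unfolding poly_fun_def by (rule eval_poly_cong_vars) (use z in simp)
  then show "poly_fun P y = 0" using vanish by simp
qed


section \<open>Filtered algebras of functions on Young diagrams\<close>

lemma filt_eval_poly: "filt g w n =
    {f. \<exists>P. (\<forall>a\<in>Poly_Mapping.keys P. wdeg w a \<le> n) \<and> (\<forall>xs\<in>YY. f xs = eval_poly g P xs)}"
  by (simp add: filt_def evalp_eq_eval_poly)

lemma filt_const: "(\<lambda>x. c) \<in> filt g w 0"
  unfolding filt_eval_poly by (intro CollectI exI[of _ "Poly_Mapping.single 0 c"]) (auto simp: wdeg_def)

lemma filt_gen: "g k \<in> filt g w (w k)"
  unfolding filt_eval_poly
  by (intro CollectI exI[of _ "Poly_Mapping.single (Poly_Mapping.single k 1) 1"]) (auto simp: wdeg_def)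

lemma filt_mult:
  assumes "f \<in> filt g w a" "h \<in> filt g w b"
  shows "(\<lambda>x. f x * h x) \<in> filt g w (a + b)"
proof -
  obtain P where P: "\<forall>e\<in>Poly_Mapping.keys P. wdeg w e \<le> a" "\<forall>xs\<in>YY. f xs = eval_poly g P xs"
    using assms(1) unfolding filt_eval_poly by blast
  obtain Q where Q: "\<forall>e\<in>Poly_Mapping.keys Q. wdeg w e \<le> b" "\<forall>xs\<in>YY. h xs = eval_poly g Q xs"
    using assms(2) unfolding filt_eval_poly by blast
  have "\<forall>e\<in>Poly_Mapping.keys (P * Q). wdeg w e \<le> a + b"
    using keys_mult[of P Q] P(1) Q(1) by (force simp: wdeg_add intro: add_mono)
  moreover have "\<forall>xs\<in>YY. f xs * h xs = eval_poly g (P * Q) xs"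
    using P(2) Q(2) by (simp add: eval_poly_mult)
  ultimately show ?thesis unfolding filt_eval_poly by blast
qed

lemma filt_add:
  assumes "f \<in> filt g w a" "h \<in> filt g w a"
  shows "(\<lambda>x. f x + h x) \<in> filt g w a"
proof -
  obtain P where P: "\<forall>e\<in>Poly_Mapping.keys P. wdeg w e \<le> a" "\<forall>xs\<in>YY. f xs = eval_poly g P xs"
    using assms(1) unfolding filt_eval_poly by blast
  obtain Q where Q: "\<forall>e\<in>Poly_Mapping.keys Q. wdeg w e \<le> a" "\<forall>xs\<in>YY. h xs = eval_poly g Q xs"
    using assms(2) unfolding filt_eval_poly by blast
  have "\<forall>e\<in>Poly_Mapping.keys (P + Q). wdeg w e \<le> a"
    using keys_add[of P Q] P(1) Q(1) by blast
  moreover have "\<forall>xs\<in>YY. f xs + h xs = eval_poly g (P + Q) xs"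
    using P(2) Q(2) by (simp add: eval_poly_add)
  ultimately show ?thesis unfolding filt_eval_poly by blast
qed

lemma filt_mono: "f \<in> filt g w a \<Longrightarrow> a \<le> b \<Longrightarrow> f \<in> filt g w b"
  unfolding filt_def by (auto intro: order_trans)

lemma filt_cong: "f \<in> filt g w a \<Longrightarrow> (\<And>xs. xs \<in> YY \<Longrightarrow> f' xs = f xs) \<Longrightarrow> f' \<in> filt g w a"
  unfolding filt_def by auto

lemma filt_scale: "f \<in> filt g w a \<Longrightarrow> (\<lambda>x. c * f x) \<in> filt g w a"
  using filt_mult[OF filt_const] by fastforce

lemma filt_sum:
  assumes "\<And>i. i \<in> A \<Longrightarrow> F i \<in> filt g w a"
  shows "(\<lambda>x. \<Sum>i\<in>A. F i x) \<in> filt g w a"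
  using assms
proof (induction A rule: infinite_finite_induct)
  case (insert i A)
  then show ?case using filt_add[of "F i" g w a "\<lambda>x. \<Sum>i\<in>A. F i x"] by simp
qed (use filt_mono[OF filt_const[of 0]] in simp_all)

lemma filt_subst:
  assumes "\<And>k. g k \<in> filt h v (w k)"
  shows "filt g w n \<subseteq> filt h v n"
proof
  fix f assume "f \<in> filt g w n"
  then obtain P where P: "\<forall>a\<in>Poly_Mapping.keys P. wdeg w a \<le> n" "\<forall>xs\<in>YY. f xs = eval_poly g P xs"
    unfolding filt_eval_poly by auto
  have "eval_poly g P \<in> filt h v n"
    by (rule eval_poly_closure[where C="\<lambda>f a. f \<in> filt h v a" and w=w])
      (use filt_const filt_mult filt_add filt_mono assms P(1) in auto)
  then show "f \<in> filt h v n" by (rule filt_cong) (use P in auto)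
qed


section \<open>Kerov coordinates versus shifted power sums\<close>

lemma part_at_antimono:
  assumes "is_partition xs" "1 \<le> r"
  shows "part_at xs (Suc r) \<le> part_at xs r"
proof (cases "Suc r \<le> length xs")
  case True
  then have "xs ! r \<le> xs ! (r - 1)"
    using assms sorted_wrt_nth_less[of "(\<ge>)" xs "r - 1" r] by (simp add: is_partition_def)
  then show ?thesis using True assms(2) by (simp add: part_at_def)
qed (simp add: part_at_def)

text \<open>Walking down the border of the diagram, row r (0 \<le> r \<le> \<ell>) contributes the point
  (r, lambda_{r+1}) and row r \<ge> 1 the point (r, lambda_r); these are inner resp. outer corners
  exactly when lambda_{r+1} < lambda_r, and otherwise they coincide and cancel.\<close>

lemma pbold_border_sum:
  assumes "is_partition xs"
  shows "pbold \<theta> m xs = (\<Sum>r\<le>length xs. kcoord \<theta> (r, part_at xs (Suc r)) ^ m)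
                       - (\<Sum>r=1..length xs. kcoord \<theta> (r, part_at xs r) ^ m)"
proof -
  let ?L = "length xs" and ?l = "part_at xs"
  let ?F = "\<lambda>r s. kcoord \<theta> (r, s) ^ m"
  have inner: "inner_corners xs = (\<lambda>r. (r, ?l (Suc r))) ` {r\<in>{..?L}. r = 0 \<or> ?l (Suc r) < ?l r}"
    by (auto simp: inner_corners_def image_def)
  have outer: "outer_corners xs = (\<lambda>r. (r, ?l r)) ` {r\<in>{..?L}. 1 \<le> r \<and> ?l (Suc r) < ?l r}"
    by (auto simp: outer_corners_def image_def)
  have "(\<Sum>c\<in>inner_corners xs. kcoord \<theta> c ^ m)
      = (\<Sum>r\<le>?L. if r = 0 \<or> ?l (Suc r) < ?l r then ?F r (?l (Suc r)) else 0)"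
    unfolding inner sum.inter_filter[OF finite_atMost, symmetric]
    by (subst sum.reindex) (auto simp: inj_on_def)
  moreover have "(\<Sum>c\<in>outer_corners xs. kcoord \<theta> c ^ m)
      = (\<Sum>r\<le>?L. if 1 \<le> r \<and> ?l (Suc r) < ?l r then ?F r (?l r) else 0)"
    unfolding outer sum.inter_filter[OF finite_atMost, symmetric]
    by (subst sum.reindex) (auto simp: inj_on_def)
  moreover have "(\<Sum>r=1..?L. ?F r (?l r)) = (\<Sum>r\<le>?L. if 1 \<le> r then ?F r (?l r) else 0)"
    by (subst sum.inter_filter[OF finite_atMost, symmetric]) (rule sum.cong, auto)
  moreover have "(if r = 0 \<or> ?l (Suc r) < ?l r then ?F r (?l (Suc r)) else 0)
      - (if 1 \<le> r \<and> ?l (Suc r) < ?l r then ?F r (?l r) else 0)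
      = ?F r (?l (Suc r)) - (if 1 \<le> r then ?F r (?l r) else 0)" for r
    using part_at_antimono[OF assms, of r] by (cases "r = 0") (auto simp: not_less)
  ultimately show ?thesis
    unfolding pbold_def by (simp add: sum_subtractf[symmetric])
qed

lemma pbold_row_sum:
  assumes "is_partition xs" "1 \<le> m"
  shows "pbold \<theta> m xs = (\<Sum>r<length xs.
      let a = real (part_at xs (Suc r)) - \<theta> * real (Suc r); b = - \<theta> * real (Suc r)
      in ((a + \<theta>) ^ m - a ^ m) - ((b + \<theta>) ^ m - b ^ m))"
proof -
  let ?L = "length xs" and ?l = "part_at xs"
  have first: "(\<Sum>r\<le>?L. kcoord \<theta> (r, ?l (Suc r)) ^ m)
      = (\<Sum>r<?L. (real (?l (Suc r)) - \<theta> * real r) ^ m) + (- \<theta> * real ?L) ^ m"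
    by (simp add: kcoord_def lessThan_Suc_atMost[symmetric] part_at_def)
  have second: "(\<Sum>r=1..?L. kcoord \<theta> (r, ?l r) ^ m)
      = (\<Sum>r<?L. (real (?l (Suc r)) - \<theta> * real (Suc r)) ^ m)"
    by (simp add: kcoord_def sum.atLeast1_atMost_eq)
  have telescope: "(- \<theta> * real ?L) ^ m = (\<Sum>r<?L. (- \<theta> * real (Suc r)) ^ m - (- \<theta> * real r) ^ m)"
    using assms(2) by (subst sum_lessThan_telescope) simp
  show ?thesis
    unfolding pbold_border_sum[OF assms(1)] first second telescope
    by (simp add: Let_def sum_subtractf[symmetric] sum.distrib[symmetric] algebra_simps)
qed

lemma binomial_difference:
  fixes a \<theta> :: real
  shows "(a + \<theta>) ^ m - a ^ m = (\<Sum>j<m. real (m choose j) * \<theta> ^ (m - j) * a ^ j)"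
proof -
  have "(a + \<theta>) ^ m = (\<Sum>j<Suc m. real (m choose j) * a ^ j * \<theta> ^ (m - j))"
    by (simp add: binomial_ring lessThan_Suc_atMost)
  then show ?thesis by (simp add: mult_ac)
qed

lemma pbold_pstar:
  assumes "xs \<in> YY" "1 \<le> m"
  shows "pbold \<theta> m xs = (\<Sum>j<m. real (m choose j) * \<theta> ^ (m - j) * pstar \<theta> j xs)"
proof -
  have pstar_rows: "pstar \<theta> j xs = (\<Sum>r<length xs.
      (real (part_at xs (Suc r)) - \<theta> * real (Suc r)) ^ j - (- \<theta> * real (Suc r)) ^ j)" for j
    by (simp add: pstar_def sum.atLeast1_atMost_eq)
  have "pbold \<theta> m xs = (\<Sum>r<length xs. \<Sum>j<m. real (m choose j) * \<theta> ^ (m - j) *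
      ((real (part_at xs (Suc r)) - \<theta> * real (Suc r)) ^ j - (- \<theta> * real (Suc r)) ^ j))"
    using assms unfolding YY_def
    by (simp add: pbold_row_sum Let_def binomial_difference sum_subtractf[symmetric] algebra_simps)
  also have "\<dots> = (\<Sum>j<m. real (m choose j) * \<theta> ^ (m - j) * pstar \<theta> j xs)"
    by (subst sum.swap) (simp add: pstar_rows sum_distrib_left)
  finally show ?thesis .
qed


section \<open>The two generating systems define the same filtration\<close>

lemma pstar_zero [simp]: "pstar \<theta> 0 xs = 0"
  by (simp add: pstar_def)

lemma pstar_in_Afilt: "pstar \<theta> j \<in> Afilt \<theta> j"
proof (cases j)
  case 0
  then show ?thesis
    unfolding Afilt_def by (rule_tac filt_cong[OF filt_mono[OF filt_const[of 0]]]) simp_all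
next
  case (Suc k)
  then show ?thesis unfolding Afilt_def using filt_gen[of "\<lambda>k. pstar \<theta> (k + 1)" k] by simp
qed

text \<open>p_{k+2} is a combination of p*_0, ..., p*_{k+1}, hence of degree k+1 in A_\<theta>.\<close>

lemma pbold_in_Afilt: "pbold \<theta> (k + 2) \<in> Afilt \<theta> (k + 1)"
proof -
  have "(\<lambda>xs. \<Sum>j<k + 2. real ((k + 2) choose j) * \<theta> ^ (k + 2 - j) * pstar \<theta> j xs) \<in> Afilt \<theta> (k + 1)"
    unfolding Afilt_def
  proof (rule filt_sum)
    fix j assume "j \<in> {..<k + 2}"
    then have "pstar \<theta> j \<in> filt (\<lambda>k. pstar \<theta> (k + 1)) (\<lambda>k. k + 1) (k + 1)"
      using filt_mono pstar_in_Afilt[of \<theta> j] unfolding Afilt_def by fastforce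
    then show "(\<lambda>xs. real ((k + 2) choose j) * \<theta> ^ (k + 2 - j) * pstar \<theta> j xs)
        \<in> filt (\<lambda>k. pstar \<theta> (k + 1)) (\<lambda>k. k + 1) (k + 1)"
      using filt_scale by (simp add: mult.assoc)
  qed
  then show ?thesis unfolding Afilt_def by (rule filt_cong) (simp add: pbold_pstar)
qed

lemma pbold_leading_term:
  assumes "xs \<in> YY"
  shows "pbold \<theta> (k + 2) xs = real (k + 2) * \<theta> * pstar \<theta> (k + 1) xs
      + (\<Sum>j<k + 1. real ((k + 2) choose j) * \<theta> ^ (k + 2 - j) * pstar \<theta> j xs)"
  using pbold_pstar[OF assms, of "k + 2" \<theta>] by (simp add: binomial_Suc_n)

lemma pstar_in_Pfilt:
  assumes "\<theta> \<noteq> 0"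
  shows "pstar \<theta> j \<in> Pfilt \<theta> j"
proof (induction j rule: less_induct)
  case (less j)
  let ?P = "filt (\<lambda>k. pbold \<theta> (k + 2)) (\<lambda>k. k + 1)"
  show ?case
  proof (cases j)
    case 0
    then show ?thesis
      unfolding Pfilt_def by (rule_tac filt_cong[OF filt_mono[OF filt_const[of 0]]]) simp_all
  next
    case (Suc k)
    define S where "S xs = (\<Sum>i<k + 1. real ((k + 2) choose i) * \<theta> ^ (k + 2 - i) * pstar \<theta> i xs)"
      for xs
    have "S \<in> ?P (k + 1)"
      unfolding S_def
    proof (rule filt_sum)
      fix i assume "i \<in> {..<k + 1}"
      then have "pstar \<theta> i \<in> ?P (k + 1)"
        using less.IH[of i] filt_mono Suc unfolding Pfilt_def by fastforce
      then show "(\<lambda>xs. real ((k + 2) choose i) * \<theta> ^ (k + 2 - i) * pstar \<theta> i xs) \<in> ?P (k + 1)"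
        using filt_scale by (simp add: mult.assoc)
    qed
    then have "(\<lambda>xs. 1 / (real (k + 2) * \<theta>) * (pbold \<theta> (k + 2) xs + (- 1) * S xs)) \<in> ?P (k + 1)"
      using filt_gen[of "\<lambda>k. pbold \<theta> (k + 2)" k "\<lambda>k. k + 1"]
      by (intro filt_scale filt_add) simp_all
    then have "pstar \<theta> (k + 1) \<in> ?P (k + 1)"
    proof (rule filt_cong)
      fix xs assume "xs \<in> YY"
      then have "pbold \<theta> (k + 2) xs = real (k + 2) * \<theta> * pstar \<theta> (k + 1) xs + S xs"
        unfolding S_def by (rule pbold_leading_term)
      moreover have "real (k + 2) * \<theta> \<noteq> 0" using assms by simp
      ultimately show "pstar \<theta> (k + 1) xs = 1 / (real (k + 2) * \<theta>) * (pbold \<theta> (k + 2) xs + (- 1) * S xs)"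
        by simp
    qed
    then show ?thesis using Suc unfolding Pfilt_def by simp
  qed
qed

theorem Afilt_eq_Pfilt:
  assumes "\<theta> \<noteq> 0"
  shows "Afilt \<theta> n = Pfilt \<theta> n"
proof
  show "Afilt \<theta> n \<subseteq> Pfilt \<theta> n"
    unfolding Afilt_def Pfilt_def
    by (rule filt_subst) (use pstar_in_Pfilt[OF assms] in \<open>simp add: Pfilt_def\<close>)
  show "Pfilt \<theta> n \<subseteq> Afilt \<theta> n"
    unfolding Afilt_def Pfilt_def
    by (rule filt_subst) (use pbold_in_Afilt in \<open>simp add: Afilt_def\<close>)
qed


section \<open>Functions that are polynomial in each coordinate separately\<close>

text \<open>This is the only information about polynomial functions needed to show
  that they vanish identically once they vanish on a large enough grid.\<close>

definition coord_poly :: "((nat \<Rightarrow> real) \<Rightarrow> real) \<Rightarrow> nat \<Rightarrow> bool" where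
  "coord_poly f d \<longleftrightarrow> (\<forall>j x. \<exists>q. degree q \<le> d \<and> (\<forall>t. f (x(j := t)) = poly q t))"

lemma coord_poly_const: "coord_poly (\<lambda>x. c) 0"
  unfolding coord_poly_def by (auto intro!: exI[of _ "[:c:]"])

lemma coord_poly_coord: "coord_poly (\<lambda>x. x i) 1"
  unfolding coord_poly_def
proof (intro allI)
  fix j and x :: "nat \<Rightarrow> real"
  show "\<exists>q. degree q \<le> 1 \<and> (\<forall>t. (x(j := t)) i = poly q t)"
  proof (cases "i = j")
    case True then show ?thesis by (intro exI[of _ "[:0, 1:]"]) auto
  next
    case False then show ?thesis by (intro exI[of _ "[:x i:]"]) auto
  qed
qed

lemma coord_poly_mult:
  assumes "coord_poly f a" "coord_poly h b"
  shows "coord_poly (\<lambda>x. f x * h x) (a + b)"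
  unfolding coord_poly_def
proof (intro allI)
  fix j and x :: "nat \<Rightarrow> real"
  obtain q1 where q1: "degree q1 \<le> a" "\<forall>t. f (x(j := t)) = poly q1 t"
    using assms(1) unfolding coord_poly_def by blast
  obtain q2 where q2: "degree q2 \<le> b" "\<forall>t. h (x(j := t)) = poly q2 t"
    using assms(2) unfolding coord_poly_def by blast
  have "degree (q1 * q2) \<le> a + b" using degree_mult_le[of q1 q2] q1(1) q2(1) by linarith
  with q1(2) q2(2) show "\<exists>q. degree q \<le> a + b \<and> (\<forall>t. f (x(j := t)) * h (x(j := t)) = poly q t)"
    by (intro exI[of _ "q1 * q2"]) simp
qed

lemma coord_poly_add:
  assumes "coord_poly f a" "coord_poly h a"
  shows "coord_poly (\<lambda>x. f x + h x) a"
  unfolding coord_poly_def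
proof (intro allI)
  fix j and x :: "nat \<Rightarrow> real"
  obtain q1 where q1: "degree q1 \<le> a" "\<forall>t. f (x(j := t)) = poly q1 t"
    using assms(1) unfolding coord_poly_def by blast
  obtain q2 where q2: "degree q2 \<le> a" "\<forall>t. h (x(j := t)) = poly q2 t"
    using assms(2) unfolding coord_poly_def by blast
  have "degree (q1 + q2) \<le> a" using degree_add_le q1(1) q2(1) by blast
  with q1(2) q2(2) show "\<exists>q. degree q \<le> a \<and> (\<forall>t. f (x(j := t)) + h (x(j := t)) = poly q t)"
    by (intro exI[of _ "q1 + q2"]) simp
qed

lemma coord_poly_mono: "coord_poly f a \<Longrightarrow> a \<le> b \<Longrightarrow> coord_poly f b"
  unfolding coord_poly_def by (meson order_trans)

lemma coord_poly_eval_poly: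
  assumes "\<And>k. coord_poly (g k) (w k)" "\<forall>a\<in>Poly_Mapping.keys P. wdeg w a \<le> n"
  shows "coord_poly (eval_poly g P) n"
  by (rule eval_poly_closure[where C=coord_poly and w=w])
    (use coord_poly_const coord_poly_mult coord_poly_add coord_poly_mono assms in auto)

lemma coord_poly_add_const: "coord_poly f a \<Longrightarrow> coord_poly (\<lambda>x. f x + c) a"
  using coord_poly_add[OF _ coord_poly_mono[OF coord_poly_const]] by blast

lemma coord_poly_power: "coord_poly f a \<Longrightarrow> coord_poly (\<lambda>x. f x ^ e) (e * a)"
proof (induction e)
  case 0 then show ?case using coord_poly_const[of 1] by simp
next
  case (Suc e)
  from coord_poly_mult[OF Suc(2) Suc(1)[OF Suc(2)]] show ?case by (simp add: add.commute)
qed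

lemma coord_poly_sum:
  assumes "\<And>i. i \<in> A \<Longrightarrow> coord_poly (F i) a"
  shows "coord_poly (\<lambda>x. \<Sum>i\<in>A. F i x) a"
  using assms
proof (induction A rule: infinite_finite_induct)
  case (insert i A)
  then show ?case using coord_poly_add[of "F i" a "\<lambda>x. \<Sum>i\<in>A. F i x"] by simp
qed (use coord_poly_mono[OF coord_poly_const[of 0]] in simp_all)


lemma coord_poly_affine: "coord_poly (\<lambda>x. (\<Sum>j\<in>A. x j * b j) - e) 1"
proof -
  have "coord_poly (\<lambda>x. b j * x j) 1" for j
    using coord_poly_mult[OF coord_poly_const coord_poly_coord] by simp
  then have "coord_poly (\<lambda>x. (\<Sum>j\<in>A. x j * b j) + - e) 1"
    by (intro coord_poly_add_const coord_poly_sum) (simp add: mult.commute)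
  then show ?thesis by simp
qed

lemma coord_poly_line_vanishing:
  assumes "coord_poly G D" and "\<And>s. c \<le> s \<Longrightarrow> s \<le> c + D \<Longrightarrow> G (x(j := real s)) = 0"
  shows "G x = 0"
proof -
  obtain q where q: "degree q \<le> D" "\<And>t. G (x(j := t)) = poly q t"
    using assms(1) unfolding coord_poly_def by blast
  have "poly q t = 0" if "t \<in> real ` {c..c + D}" for t
    using that assms(2) q(2) by auto
  moreover have "card (real ` {c..c + D}) = Suc D" by (simp add: card_image)
  ultimately have "q = 0"
    using poly_eqI_degree[of "real ` {c..c + D}" q 0] q(1) by auto
  then show "G x = 0" using q(2)[of "x j"] by simp
qed

text \<open>A function of the first N coordinates which is polynomial of degree at most D in each of
  them and vanishes on a box of integer points with D + 1 values per side vanishes identically: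
  free the coordinates one at a time, from the first to the last.\<close>

lemma grid_vanishing:
  fixes G :: "(nat \<Rightarrow> real) \<Rightarrow> real" and c :: "nat \<Rightarrow> nat"
  assumes cp: "coord_poly G D"
    and local: "\<And>x x'. (\<forall>i<N. x i = x' i) \<Longrightarrow> G x = G x'"
    and grid: "\<And>v. (\<forall>i<N. c i \<le> v i \<and> v i \<le> c i + D) \<Longrightarrow> G (\<lambda>i. real (v i)) = 0"
  shows "G x = 0"
proof -
  have "\<forall>x v. (\<forall>i. j \<le> i \<longrightarrow> i < N \<longrightarrow> c i \<le> v i \<and> v i \<le> c i + D \<and> x i = real (v i))
      \<longrightarrow> G x = 0" for j
  proof (induction j)
    case 0
    show ?case
    proof (intro allI impI)
      fix x v assume on_grid: "\<forall>i. 0 \<le> i \<longrightarrow> i < N \<longrightarrow> c i \<le> v i \<and> v i \<le> c i + D \<and> x i = real (v i)"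
      then have "G x = G (\<lambda>i. real (v i))" by (intro local) auto
      also have "\<dots> = 0" by (rule grid) (use on_grid in auto)
      finally show "G x = 0" .
    qed
  next
    case (Suc j)
    show ?case
    proof (intro allI impI)
      fix x v
      assume on_grid: "\<forall>i. Suc j \<le> i \<longrightarrow> i < N \<longrightarrow> c i \<le> v i \<and> v i \<le> c i + D \<and> x i = real (v i)"
      show "G x = 0"
      proof (rule coord_poly_line_vanishing[OF cp])
        fix s assume "c j \<le> s" "s \<le> c j + D"
        then have "\<forall>i. j \<le> i \<longrightarrow> i < N \<longrightarrow> c i \<le> (v(j := s)) i \<and> (v(j := s)) i \<le> c i + D
            \<and> (x(j := real s)) i = real ((v(j := s)) i)"
          using on_grid by (metis fun_upd_apply le_antisym not_less_eq_eq)
        then show "G (x(j := real s)) = 0" using Suc.IH by blast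
      qed
    qed
  qed
  from this[of N] show ?thesis by simp
qed

section \<open>Lagrange interpolation\<close>

definition lagrange_basis :: "(nat \<Rightarrow> real) \<Rightarrow> nat \<Rightarrow> nat \<Rightarrow> real poly" where
  "lagrange_basis v n j =
     smult (1 / (\<Prod>i\<in>{..<n}-{j}. v j - v i)) (\<Prod>i\<in>{..<n}-{j}. [:- v i, 1:])"

lemma lagrange_basis_nodes:
  assumes "inj_on v {..<n}" "i < n" "j < n"
  shows "poly (lagrange_basis v n j) (v i) = (if i = j then 1 else 0)"
proof (cases "i = j")
  case True
  have "(\<Prod>i\<in>{..<n}-{j}. v j - v i) \<noteq> 0" using assms by (auto simp: inj_on_def)
  then show ?thesis using True by (simp add: lagrange_basis_def poly_prod)
next
  case False
  have "(\<Prod>k\<in>{..<n}-{j}. poly [:- v k, 1:] (v i)) = 0"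
    by (rule prod_zero) (use assms False in auto)
  then show ?thesis using False by (simp add: lagrange_basis_def poly_prod)
qed

lemma lagrange_basis_degree:
  assumes "j < n"
  shows "degree (lagrange_basis v n j) \<le> n - 1"
proof -
  have "degree (lagrange_basis v n j) \<le> degree (\<Prod>i\<in>{..<n}-{j}. [:- v i, 1:])"
    unfolding lagrange_basis_def by (rule degree_smult_le)
  also have "\<dots> \<le> (\<Sum>i\<in>{..<n}-{j}. degree [:- v i, 1:])"
    by (rule degree_prod_sum_le[unfolded comp_def]) simp
  also have "\<dots> = n - 1" using assms by simp
  finally show ?thesis .
qed

lemma lagrange_interpolation_monom:
  assumes distinct: "inj_on v {..<n}" and "k < n"
  shows "(\<Sum>j<n. smult (v j ^ k) (lagrange_basis v n j)) = monom 1 k"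
proof (rule poly_eqI_degree[of "v ` {..<n}"])
  fix x assume "x \<in> v ` {..<n}"
  then obtain i where i: "i < n" "x = v i" by auto
  have "poly (\<Sum>j<n. smult (v j ^ k) (lagrange_basis v n j)) x = (\<Sum>j<n. if j = i then v i ^ k else 0)"
    unfolding poly_sum i(2) by (rule sum.cong) (use i lagrange_basis_nodes[OF distinct] in auto)
  then show "poly (\<Sum>j<n. smult (v j ^ k) (lagrange_basis v n j)) x = poly (monom 1 k) x"
    using i by (simp add: poly_monom)
next
  have card_nodes: "card (v ` {..<n}) = n" using distinct by (simp add: card_image)
  have "degree (\<Sum>j<n. smult (v j ^ k) (lagrange_basis v n j)) \<le> n - 1"
    by (rule degree_sum_le) (use lagrange_basis_degree degree_smult_le order_trans in blast)+
  then show "degree (\<Sum>j<n. smult (v j ^ k) (lagrange_basis v n j)) < card (v ` {..<n})"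
    using card_nodes assms(2) by linarith
  show "degree (monom (1::real) k) < card (v ` {..<n})"
    using card_nodes assms(2) by (simp add: degree_monom_eq)
qed

text \<open>Hence Vandermonde systems with distinct nodes are solvable: the coefficients of the
  Lagrange basis give the inverse matrix.\<close>

lemma vandermonde_solvable:
  fixes v z :: "nat \<Rightarrow> real"
  assumes distinct: "inj_on v {..<n}"
  shows "\<exists>w. \<forall>k<n. (\<Sum>j<n. w j * v j ^ k) = z k"
proof -
  define w where "w j = (\<Sum>i<n. z i * coeff (lagrange_basis v n j) i)" for j
  have "(\<Sum>j<n. w j * v j ^ k) = z k" if "k < n" for k
  proof -
    have dual: "(\<Sum>j<n. v j ^ k * coeff (lagrange_basis v n j) i) = (if i = k then 1 else 0)" for i
      using arg_cong[OF lagrange_interpolation_monom[OF distinct that], of "\<lambda>p. coeff p i"]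
      by (simp add: coeff_sum)
    have "(\<Sum>j<n. w j * v j ^ k) = (\<Sum>i<n. z i * (\<Sum>j<n. v j ^ k * coeff (lagrange_basis v n j) i))"
      unfolding w_def sum_distrib_right sum_distrib_left by (subst sum.swap) (simp add: mult_ac)
    also have "\<dots> = (\<Sum>i<n. if i = k then z i else 0)"
      by (rule sum.cong) (simp_all add: dual)
    also have "\<dots> = z k"
      using that by simp
    finally show ?thesis .
  qed
  then show ?thesis by blast
qed

section \<open>Algebraic independence\<close>

text \<open>The shifted power sum p*_{k+1} of a diagram with N rows, extended to arbitrary real row
  lengths x 0, ..., x (N - 1).\<close>

definition shifted_psum :: "real \<Rightarrow> nat \<Rightarrow> nat \<Rightarrow> (nat \<Rightarrow> real) \<Rightarrow> real" where
  "shifted_psum \<theta> N k x = (\<Sum>i<N. (x i - \<theta> * real (Suc i)) ^ (k + 1) - (- \<theta> * real (Suc i)) ^ (k + 1))"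

lemma coord_poly_shifted_psum: "coord_poly (shifted_psum \<theta> N k) (k + 1)"
proof -
  have "coord_poly (\<lambda>x. (x i + - (\<theta> * real (Suc i))) ^ (k + 1) + - ((- \<theta> * real (Suc i)) ^ (k + 1))) (k + 1)"
    for i
    using coord_poly_add_const[OF coord_poly_power[OF coord_poly_add_const[OF coord_poly_coord]]]
    by (metis mult.right_neutral)
  then show ?thesis
    unfolding shifted_psum_def[abs_def] by (intro coord_poly_sum) simp
qed

lemma shifted_psum_diagram:
  assumes pos: "\<forall>i<N. 1 \<le> v i" and decr: "\<And>i j. i < j \<Longrightarrow> j < N \<Longrightarrow> v j < v i"
  shows "map v [0..<N] \<in> YY"
    and "pstar \<theta> (k + 1) (map v [0..<N]) = shifted_psum \<theta> N k (\<lambda>i. real (v i))"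
proof -
  have "sorted_wrt (\<ge>) (map v [0..<N])"
    unfolding sorted_wrt_iff_nth_less using decr by (auto intro: less_imp_le)
  moreover have "0 \<notin> set (map v [0..<N])" using pos by fastforce
  ultimately show "map v [0..<N] \<in> YY" by (simp add: YY_def is_partition_def)
  have "part_at (map v [0..<N]) (Suc i) = v i" if "i < N" for i
    using that by (simp add: part_at_def)
  then show "pstar \<theta> (k + 1) (map v [0..<N]) = shifted_psum \<theta> N k (\<lambda>i. real (v i))"
    unfolding pstar_def shifted_psum_def by (simp add: sum.atLeast1_atMost_eq)
qed

text \<open>Integer points whose i-th coordinate lies in [(N-i)(D+1), (N-i)(D+1)+D] are
  strictly decreasing positive sequences, i.e. Young diagrams, and such boxes suffice for
  grid_vanishing.\<close>

lemma pstar_relation_extends: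
  assumes rel: "\<forall>xs\<in>YY. eval_poly (\<lambda>k. pstar \<theta> (k + 1)) P xs = 0"
  shows "eval_poly (shifted_psum \<theta> N) P x = 0"
proof -
  obtain D where D: "\<forall>a\<in>Poly_Mapping.keys P. wdeg (\<lambda>k. k + 1) a \<le> D"
    using wdeg_bounded by blast
  have cp: "coord_poly (eval_poly (shifted_psum \<theta> N) P) D"
    by (rule coord_poly_eval_poly) (use coord_poly_shifted_psum D in auto)
  show ?thesis
  proof (rule grid_vanishing[OF cp, where c="\<lambda>i. (N - i) * (D + 1)" and N=N])
    fix v assume box: "\<forall>i<N. (N - i) * (D + 1) \<le> v i \<and> v i \<le> (N - i) * (D + 1) + D"
    have pos: "\<forall>i<N. 1 \<le> v i"
    proof (intro allI impI)
      fix i assume "i < N"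
      then have "1 \<le> (N - i) * (D + 1)" by simp
      with box \<open>i < N\<close> show "1 \<le> v i" by (meson order_trans)
    qed
    have decr: "v j < v i" if "i < j" "j < N" for i j
    proof -
      have "v j \<le> (N - j) * (D + 1) + D" using box that by auto
      also have "\<dots> < (N - j + 1) * (D + 1)" by simp
      also have "\<dots> \<le> (N - i) * (D + 1)" using that by (intro mult_right_mono) auto
      also have "\<dots> \<le> v i" using box that by auto
      finally show ?thesis .
    qed
    have "eval_poly (shifted_psum \<theta> N) P (\<lambda>i. real (v i))
        = eval_poly (\<lambda>k. pstar \<theta> (k + 1)) P (map v [0..<N])"
      by (rule eval_poly_cong_vars) (rule shifted_psum_diagram(2)[OF pos decr, symmetric])
    also have "\<dots> = 0" using rel shifted_psum_diagram(1)[OF pos decr] by blast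
    finally show "eval_poly (shifted_psum \<theta> N) P (\<lambda>i. real (v i)) = 0" .
  next
    fix x x' :: "nat \<Rightarrow> real" assume "\<forall>i<N. x i = x' i"
    then show "eval_poly (shifted_psum \<theta> N) P x = eval_poly (shifted_psum \<theta> N) P x'"
      by (intro eval_poly_cong_vars) (simp add: shifted_psum_def)
  qed
qed

lemma block_sum:
  fixes f :: "nat \<Rightarrow> real"
  assumes "\<forall>j<n. mm j \<le> M"
  shows "(\<Sum>i<n * M. if i mod M < mm (i div M) then f (i div M) else 0) = (\<Sum>j<n. real (mm j) * f j)"
proof (cases "M = 0")
  case True
  then show ?thesis using assms by simp
next
  case False
  let ?F = "\<lambda>i. if i mod M < mm (i div M) then f (i div M) else 0"
  have "(\<Sum>i<n * M. ?F i) = (\<Sum>j<n. \<Sum>i\<in>{j * M..<j * M + M}. ?F i)"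
    by (rule sum.nat_group[symmetric])
  also have "\<dots> = (\<Sum>j<n. \<Sum>r<M. ?F (r + j * M))"
  proof (rule sum.cong[OF refl])
    fix j
    show "(\<Sum>i\<in>{j * M..<j * M + M}. ?F i) = (\<Sum>r<M. ?F (r + j * M))"
      using sum.shift_bounds_nat_ivl[of ?F 0 "j * M" M] by (simp add: atLeast0LessThan add.commute)
  qed
  also have "\<dots> = (\<Sum>j<n. \<Sum>r<M. if r < mm j then f j else 0)"
    using False by (intro sum.cong refl) simp
  also have "\<dots> = (\<Sum>j<n. real (mm j) * f j)"
  proof (rule sum.cong[OF refl])
    fix j assume "j \<in> {..<n}"
    then have "(\<Sum>r<M. if r < mm j then f j else 0) = (\<Sum>r<mm j. f j)"
      using assms by (intro sum.mono_neutral_cong_right) auto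
    then show "(\<Sum>r<M. if r < mm j then f j else 0) = real (mm j) * f j" by simp
  qed
  finally show ?thesis .
qed

text \<open>Giving the value j + 1 (after the shift) to mm j rows of each block j, shifted_psum becomes
  an affine function of the multiplicities mm with Vandermonde linear part.\<close>

lemma shifted_psum_blocks:
  assumes "\<forall>j<n. mm j \<le> M"
  shows "shifted_psum \<theta> (n * M) k
      (\<lambda>i. \<theta> * real (Suc i) + (if i mod M < mm (i div M) then real (Suc (i div M)) else 0))
    = (\<Sum>j<n. real (mm j) * real (Suc j) ^ (k + 1)) - (\<Sum>i<n * M. (- \<theta> * real (Suc i)) ^ (k + 1))"
proof -
  have "(\<theta> * real (Suc i) + (if i mod M < mm (i div M) then real (Suc (i div M)) else 0)
      - \<theta> * real (Suc i)) ^ (k + 1)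
    = (if i mod M < mm (i div M) then real (Suc (i div M)) ^ (k + 1) else 0)" for i
    by (cases "i mod M < mm (i div M)") simp_all
  note shift = this
  show ?thesis
    unfolding shifted_psum_def sum_subtractf shift block_sum[OF assms, of "\<lambda>j. real (Suc j) ^ (k + 1)"] ..
qed

text \<open>By step 1 and the block configurations
  above, P composed with the affine map h vanishes at every integer point mm of a box, hence
  everywhere; since h is onto (Vandermonde), P = 0.\<close>

theorem pstar_alg_indep:
  assumes rel: "\<forall>xs\<in>YY. eval_poly (\<lambda>k. pstar \<theta> (k + 1)) P xs = 0"
  shows "P = 0"
proof -
  obtain n where n: "\<forall>k\<in>vars P. k < n" using vars_bounded by blast
  obtain d where d: "\<forall>a\<in>Poly_Mapping.keys P. wdeg (\<lambda>_. 1) a \<le> d"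
    using wdeg_bounded by blast
  define c where "c k = (\<Sum>i<n * d. (- \<theta> * real (Suc i)) ^ (k + 1))" for k
  define h where "h k mm = (\<Sum>j<n. mm j * real (Suc j) ^ (k + 1)) - c k" for k and mm :: "nat \<Rightarrow> real"
  have vanish: "eval_poly h P mm = 0" for mm
  proof (rule grid_vanishing[where G="eval_poly h P" and c="\<lambda>_. 0" and D=d and N=n])
    show "coord_poly (eval_poly h P) d"
      by (rule coord_poly_eval_poly) (use coord_poly_affine d in \<open>auto simp: h_def[abs_def]\<close>)
  next
    fix mm :: "nat \<Rightarrow> nat" assume "\<forall>i<n. 0 \<le> mm i \<and> mm i \<le> 0 + d"
    then have mm: "\<forall>j<n. mm j \<le> d" by simp
    define x where "x = (\<lambda>i. \<theta> * real (Suc i)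
      + (if i mod d < mm (i div d) then real (Suc (i div d)) else 0))"
    have "shifted_psum \<theta> (n * d) k x = h k (\<lambda>i. real (mm i))" for k
      unfolding x_def h_def c_def by (rule shifted_psum_blocks[OF mm])
    then have "eval_poly h P (\<lambda>i. real (mm i)) = eval_poly (shifted_psum \<theta> (n * d)) P x"
      by (intro eval_poly_cong_vars) simp
    also have "\<dots> = 0" by (rule pstar_relation_extends[OF rel])
    finally show "eval_poly h P (\<lambda>i. real (mm i)) = 0" .
  next
    fix x x' :: "nat \<Rightarrow> real" assume "\<forall>i<n. x i = x' i"
    then show "eval_poly h P x = eval_poly h P x'"
      by (intro eval_poly_cong_vars) (simp add: h_def)
  qed
  show ?thesis
  proof (rule zero_by_onto_substitution[OF vanish])
    fix y
    have "inj_on (\<lambda>j. real (Suc j)) {..<n}" by (simp add: inj_on_def)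
    then obtain u where u: "\<forall>k<n. (\<Sum>j<n. u j * real (Suc j) ^ k) = y k + c k"
      using vandermonde_solvable[of "\<lambda>j. real (Suc j)" n "\<lambda>k. y k + c k"] by blast
    have "h k (\<lambda>j. u j / real (Suc j)) = y k" if "k < n" for k
      using u that by (simp add: h_def)
    then show "\<exists>z. \<forall>k\<in>vars P. h k z = y k" using n by blast
  qed
qed

lemma triangular_solvable:
  fixes a :: "nat \<Rightarrow> nat \<Rightarrow> real"
  assumes "\<And>k. a k k \<noteq> 0"
  shows "\<exists>z. \<forall>k<n. (\<Sum>j\<le>k. a k j * z j) = y k"
proof (induction n)
  case (Suc n)
  then obtain z where z: "\<forall>k<n. (\<Sum>j\<le>k. a k j * z j) = y k" by blast
  define z' where "z' = z(n := (y n - (\<Sum>j<n. a n j * z j)) / a n n)"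
  have "(\<Sum>j\<le>k. a k j * z' j) = y k" if "k < Suc n" for k
  proof (cases "k < n")
    case True
    then have "(\<Sum>j\<le>k. a k j * z' j) = (\<Sum>j\<le>k. a k j * z j)"
      by (intro sum.cong) (auto simp: z'_def)
    then show ?thesis using z True by simp
  next
    case False
    then have "k = n" using that by simp
    have "(\<Sum>j\<le>n. a n j * z' j) = (\<Sum>j<n. a n j * z j) + a n n * z' n"
      by (simp add: lessThan_Suc_atMost[symmetric] z'_def)
    also have "\<dots> = y n" using assms by (simp add: z'_def)
    finally show ?thesis using \<open>k = n\<close> by simp
  qed
  then show ?case by blast
qed simp

text \<open>They are obtained from the
  p*_{j+1} by an invertible triangular linear substitution L, so a relation P among them yields
  the relation P(L) among the p*'s, which is the zero polynomial; as L is onto, P = 0.\<close>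

theorem pbold_alg_indep:
  assumes "\<theta> \<noteq> 0" and rel: "\<forall>xs\<in>YY. eval_poly (\<lambda>k. pbold \<theta> (k + 2)) P xs = 0"
  shows "P = 0"
proof -
  define a where "a k j = real ((k + 2) choose (j + 1)) * \<theta> ^ (k + 1 - j)" for k j
  define L where "L k y = (\<Sum>j\<le>k. a k j * y j)" for k and y :: "nat \<Rightarrow> real"
  have pbold_L: "pbold \<theta> (k + 2) xs = L k (\<lambda>j. pstar \<theta> (j + 1) xs)" if "xs \<in> YY" for k xs
  proof -
    have "pbold \<theta> (k + 2) xs = (\<Sum>j<Suc (k + 1). real ((k + 2) choose j) * \<theta> ^ (k + 2 - j) * pstar \<theta> j xs)"
      using pbold_pstar[OF that, of "k + 2" \<theta>] by simp
    also have "\<dots> = (\<Sum>j<k + 1. real ((k + 2) choose Suc j) * \<theta> ^ (k + 2 - Suc j) * pstar \<theta> (Suc j) xs)"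
      by (simp only: sum.lessThan_Suc_shift pstar_zero mult_zero_right add_0)
    also have "\<dots> = L k (\<lambda>j. pstar \<theta> (j + 1) xs)"
      unfolding L_def a_def by (rule sum.cong) auto
    finally show ?thesis .
  qed
  obtain Q where Q: "eval_poly L P = poly_fun Q"
    using is_poly_fun_subst[of L P] is_poly_fun_linear[of "a k" "{..k}" for k]
    unfolding is_poly_fun_def L_def[abs_def] by blast
  have "\<forall>xs\<in>YY. eval_poly (\<lambda>k. pstar \<theta> (k + 1)) Q xs = 0"
  proof
    fix xs assume xs: "xs \<in> YY"
    have "eval_poly (\<lambda>k. pstar \<theta> (k + 1)) Q xs = poly_fun Q (\<lambda>j. pstar \<theta> (j + 1) xs)"
      unfolding poly_fun_def by (rule eval_poly_cong_vars) simp
    also have "\<dots> = eval_poly L P (\<lambda>j. pstar \<theta> (j + 1) xs)" using Q by simp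
    also have "\<dots> = eval_poly (\<lambda>k. pbold \<theta> (k + 2)) P xs"
      by (rule eval_poly_cong_vars) (rule pbold_L[OF xs, symmetric])
    finally show "eval_poly (\<lambda>k. pstar \<theta> (k + 1)) Q xs = 0" using rel xs by simp
  qed
  then have "Q = 0" by (rule pstar_alg_indep)
  then have vanish: "eval_poly L P z = 0" for z by (simp add: Q poly_fun_def)
  show ?thesis
  proof (rule zero_by_onto_substitution[OF vanish])
    fix y
    obtain n where n: "\<forall>k\<in>vars P. k < n" using vars_bounded by blast
    have "a k k \<noteq> 0" for k using assms(1) by (simp add: a_def)
    then obtain z where "\<forall>k<n. L k z = y k"
      using triangular_solvable[of a n y] unfolding L_def by blast
    then show "\<exists>z. \<forall>k\<in>vars P. L k z = y k" using n by blast
  qed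
qed

theorem mainTheorem8:
  fixes \<theta> :: real
  assumes "\<theta> > 0"
  shows "(\<forall>m\<ge>2. pbold \<theta> m \<in> Atheta \<theta>)
    \<and> alg_indep_on_Y (\<lambda>k. pbold \<theta> (k + 2))
    \<and> Atheta \<theta> = (\<Union>n. Pfilt \<theta> n)
    \<and> (\<forall>n. Afilt \<theta> n = Pfilt \<theta> n)"
proof (intro conjI allI impI)
  have "\<theta> \<noteq> 0" using assms by simp
  then show "Afilt \<theta> n = Pfilt \<theta> n" for n by (rule Afilt_eq_Pfilt)
  then show "Atheta \<theta> = (\<Union>n. Pfilt \<theta> n)" by (simp add: Atheta_def)
  show "alg_indep_on_Y (\<lambda>k. pbold \<theta> (k + 2))"
    unfolding alg_indep_on_Y_def evalp_eq_eval_poly using pbold_alg_indep[OF \<open>\<theta> \<noteq> 0\<close>] by blast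
  fix m :: nat assume "2 \<le> m"
  then have "pbold \<theta> m \<in> Afilt \<theta> (m - 1)"
    using pbold_in_Afilt[of \<theta> "m - 2"] by (simp add: numeral_2_eq_2 Suc_diff_Suc)
  then show "pbold \<theta> m \<in> Atheta \<theta>" unfolding Atheta_def by blast
qed

end
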